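(* Let $\tau\in(0,1]$. In a finite-horizon MDP with wealth levels as described in the context, the optimal lower $\tau$-quantile $\underline{q}^*=\max_\pi \underline{q}^\pi_\tau$ (maximum over all policies at horizon $T$, with respect to $\prec_{\mathcal W}$) satisfies $$\underline{q}^* = \min\{w\in\mathcal W_T : F^*(w)\ge \tau\},\qquad\text{where } F^*(w)=\min_\pi F^\pi(w)\ \text{ for all } w,$$ the minimum over $w$ being with respect to $\preceq_{\mathcal W}$ and the minimum over $\pi$ being over all policies at horizon $T$.
   Context: An MDP is a tuple $(\mathcal S,\mathcal A,\mathcal P,r,s_0)$ with finite state set $\mathcal S$, finite action set $\mathcal A$, transition probabilities $\mathcal P(s,a,s')$, reward function $r:\mathcal S\times\mathcal A\to\mathcal R$ (values in some set $\mathcal R$), initial state $s_0$, and finite horizon $T$. A $t$-history is $h_t=(s_0,a_0,s_1,\dots,a_{t-1},s_t)$; a policy is a sequence of $T$ decision rules (possibly history-dependent and randomized) selecting actions. The wealth of a history is defined by $w(h_0)=w_0$ and $w(h_t)=w(h_{t-1})\circ r(s_{t-1},a_{t-1})$, where $\circ:\mathcal W\times\mathcal R\to\mathcal W$ is a binary operation on a wealth space $\mathcal W$ with left identity $w_0$. Let $\mathcal W_T$ be the set of wealth levels of $T$-histories; it is totally ordered by $\preceq_{\mathcal W}$ (strict part $\prec_{\mathcal W}$), has a least element $w_{\min}$ and a greatest element $w_{\max}$, and carries a distance $d$ consistent with the order. For a policy $\pi$, $p^\pi(w)$ is the probability that the $T$-history generated by $\pi$ from $s_0$ has wealth $w\in\mathcal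 W_T$; $F^\pi(w)=\sum_{w'\preceq_{\mathcal W} w}p^\pi(w')$. The lower $\tau$-quantile of $\pi$ is $\underline{q}^\pi_\tau=\min\{w\in\mathcal W_T: F^\pi(w)\ge\tau\}$ (minimum w.r.t. $\prec_{\mathcal W}$). *)

theory Defs
  imports "HOL-Probability.Probability_Mass_Function"
begin

text \<open>A t-history h_t = (s0,a0,s1,...,a_{t-1},s_t) is represented, for the fixed initial
state s0, by the list [(a0,s1),...,(a_{t-1},s_t)] of length t.\<close>

type_synonym ('s,'a) hist = "('a \<times> 's) list"
type_synonym ('s,'a) policy = "('s,'a) hist \<Rightarrow> 'a pmf"

definition last_state :: "'s \<Rightarrow> ('s,'a) hist \<Rightarrow> 's" where
  "last_state s0 h = (if h = [] then s0 else snd (last h))"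

definition hist_prob ::
  "('s \<Rightarrow> 'a \<Rightarrow> 's pmf) \<Rightarrow> 's \<Rightarrow> ('s,'a) policy \<Rightarrow> ('s,'a) hist \<Rightarrow> real" where
  "hist_prob P s0 pol h =
     (\<Prod>i<length h. pmf (pol (take i h)) (fst (h ! i))
                    * pmf (P (last_state s0 (take i h)) (fst (h ! i))) (snd (h ! i)))"

text \<open>Wealth of a history: w(h_0) = w0, w(h_t) = w(h_{t-1}) o r(s_{t-1}, a_{t-1}).\<close>
definition wealth ::
  "('w \<Rightarrow> 'r \<Rightarrow> 'w) \<Rightarrow> 'w \<Rightarrow> ('s \<Rightarrow> 'a \<Rightarrow> 'r) \<Rightarrow> 's \<Rightarrow> ('s,'a) hist \<Rightarrow> 'w" where
  "wealth op w0 r s0 h =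
     fst (foldl (\<lambda>(w, s) (a, s'). (op w (r s a), s')) (w0, s0) h)"

definition wealth_levels ::
  "('w \<Rightarrow> 'r \<Rightarrow> 'w) \<Rightarrow> 'w \<Rightarrow> ('s \<Rightarrow> 'a \<Rightarrow> 'r) \<Rightarrow> 's \<Rightarrow> nat \<Rightarrow> 'w set" where
  "wealth_levels op w0 r s0 T = wealth op w0 r s0 ` {h. length h = T}"

definition wealth_pmf ::
  "('s \<Rightarrow> 'a \<Rightarrow> 's pmf) \<Rightarrow> ('w \<Rightarrow> 'r \<Rightarrow> 'w) \<Rightarrow> 'w \<Rightarrow> ('s \<Rightarrow> 'a \<Rightarrow> 'r) \<Rightarrow> 's \<Rightarrow> nat
     \<Rightarrow> ('s,'a) policy \<Rightarrow> 'w \<Rightarrow> real" where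
  "wealth_pmf P op w0 r s0 T pol w =
     (\<Sum>h\<in>{h. length h = T \<and> wealth op w0 r s0 h = w}. hist_prob P s0 pol h)"

definition wealth_cdf ::
  "('w \<Rightarrow> 'w \<Rightarrow> bool) \<Rightarrow> ('s \<Rightarrow> 'a \<Rightarrow> 's pmf) \<Rightarrow> ('w \<Rightarrow> 'r \<Rightarrow> 'w) \<Rightarrow> 'w
     \<Rightarrow> ('s \<Rightarrow> 'a \<Rightarrow> 'r) \<Rightarrow> 's \<Rightarrow> nat \<Rightarrow> ('s,'a) policy \<Rightarrow> 'w \<Rightarrow> real" where
  "wealth_cdf le P op w0 r s0 T pol w =
     (\<Sum>w'\<in>{w'\<in>wealth_levels op w0 r s0 T. le w' w}. wealth_pmf P op w0 r s0 T pol w')"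

definition is_min_wrt :: "('w \<Rightarrow> 'w \<Rightarrow> bool) \<Rightarrow> 'w set \<Rightarrow> 'w \<Rightarrow> bool" where
  "is_min_wrt le A x \<longleftrightarrow> x \<in> A \<and> (\<forall>y\<in>A. le x y)"

definition is_max_wrt :: "('w \<Rightarrow> 'w \<Rightarrow> bool) \<Rightarrow> 'w set \<Rightarrow> 'w \<Rightarrow> bool" where
  "is_max_wrt le A x \<longleftrightarrow> x \<in> A \<and> (\<forall>y\<in>A. le y x)"

definition lower_quantile ::
  "('w \<Rightarrow> 'w \<Rightarrow> bool) \<Rightarrow> ('s \<Rightarrow> 'a \<Rightarrow> 's pmf) \<Rightarrow> ('w \<Rightarrow> 'r \<Rightarrow> 'w) \<Rightarrow> 'w
     \<Rightarrow> ('s \<Rightarrow> 'a \<Rightarrow> 'r) \<Rightarrow> 's \<Rightarrow> nat \<Rightarrow> real \<Rightarrow> ('s,'a) policy \<Rightarrow> 'w" where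
  "lower_quantile le P op w0 r s0 T tau pol =
     (THE q. is_min_wrt le {w\<in>wealth_levels op w0 r s0 T. tau \<le> wealth_cdf le P op w0 r s0 T pol w} q)"

end

theory Submission
  imports Defs
begin

text \<open>Every policy has \<open>F\<^sup>* \<le> F\<^sup>\<pi>\<close>, so each level where \<open>F\<^sup>*\<close> reaches \<open>\<tau>\<close> is also reached
by \<open>F\<^sup>\<pi>\<close>, and every \<open>\<tau>\<close>-quantile is at most \<open>q\<^sup>* = min {w. \<tau> \<le> F\<^sup>*(w)}\<close>. For each fixed
level \<open>w\<close> the infimum \<open>F\<^sup>*(w)\<close> is attained, by backward induction on the horizon: a policy
that picks greedily the first action minimising the optimal continuation value is optimal,
since randomising only forms convex combinations of these values. Take the policy attaining
\<open>F\<^sup>*\<close> at the largest level strictly below \<open>q\<^sup>*\<close>: its distribution function stays below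
\<open>\<tau>\<close> at that level, hence by monotonicity at every level below \<open>q\<^sup>*\<close>, so its quantile is
exactly \<open>q\<^sup>*\<close>.\<close>

lemma finite_lists_length_eq_Collect:
  "finite {h :: 'x::finite list. length h = n \<and> Q h}"
  by (rule finite_subset[OF _ finite_lists_length_eq[of UNIV n]]) auto

lemma sum_lists_length_Suc:
  "sum g {h :: 'x::finite list. length h = Suc n \<and> Q h}
   = (\<Sum>x\<in>UNIV. \<Sum>h\<in>{h. length h = n \<and> Q (x # h)}. g (x # h))"
proof -
  have eq: "{h :: 'x list. length h = Suc n \<and> Q h}
      = (\<lambda>(x, h). x # h) ` (SIGMA x:UNIV. {h. length h = n \<and> Q (x # h)})"
    by (auto simp: length_Suc_conv image_iff)
  have inj: "inj_on (\<lambda>(x, h). x # h) (SIGMA x:(UNIV :: 'x set). {h. length h = n \<and> Q (x # h)})"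
    by (auto simp: inj_on_def)
  show ?thesis
    unfolding eq sum.reindex[OF inj]
    by (subst sum.Sigma) (auto simp: finite_lists_length_eq_Collect split_def)
qed

lemma sum_pmf_mult_ge:
  fixes g :: "'a::finite \<Rightarrow> real"
  assumes "\<And>a. c \<le> g a"
  shows "c \<le> (\<Sum>a\<in>UNIV. pmf p a * g a)"
proof -
  have "c = (\<Sum>a\<in>UNIV. pmf p a * c)"
    using sum_pmf_eq_1[of UNIV p] by (simp add: sum_distrib_right[symmetric])
  also have "\<dots> \<le> (\<Sum>a\<in>UNIV. pmf p a * g a)"
    by (intro sum_mono mult_left_mono assms) auto
  finally show ?thesis .
qed

lemma INF_eq_attained_minimum:
  fixes f :: "'p \<Rightarrow> 'b::conditionally_complete_lattice"
  assumes "\<And>y. f x \<le> f y"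
  shows "(INF y. f y) = f x"
  by (rule cInf_eq_minimum) (use assms in auto)

lemma finite_total_has_least:
  assumes "finite W" "A \<subseteq> W" "A \<noteq> {}"
    and trans: "\<And>x y z. x \<in> W \<Longrightarrow> y \<in> W \<Longrightarrow> z \<in> W \<Longrightarrow> le x y \<Longrightarrow> le y z \<Longrightarrow> le x z"
    and total: "\<And>x y. x \<in> W \<Longrightarrow> y \<in> W \<Longrightarrow> le x y \<or> le y x"
  shows "\<exists>m. is_min_wrt le A m"
proof -
  have "finite A"
    using assms(1,2) by (rule finite_subset[rotated])
  then show ?thesis
    using assms(3,2) unfolding is_min_wrt_def
  proof (induction A rule: finite_ne_induct)
    case (singleton x)
    then show ?case
      using total[of x x] by auto
  next
    case (insert x F)
    then obtain m where m: "m \<in> F" "\<forall>y\<in>F. le m y"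
      by blast
    show ?case
    proof (cases "le m x")
      case True
      then show ?thesis
        using m by blast
    next
      case False
      then have "le x m" "le x x"
        using total[of m x] total[of x x] m insert.prems by auto
      then have "\<forall>y\<in>insert x F. le x y"
        using m trans[of x m] insert.prems by blast
      then show ?thesis
        by blast
    qed
  qed
qed

lemma finite_total_has_greatest:
  assumes "finite W" "A \<subseteq> W" "A \<noteq> {}"
    and "\<And>x y z. x \<in> W \<Longrightarrow> y \<in> W \<Longrightarrow> z \<in> W \<Longrightarrow> le x y \<Longrightarrow> le y z \<Longrightarrow> le x z"
    and "\<And>x y. x \<in> W \<Longrightarrow> y \<in> W \<Longrightarrow> le x y \<or> le y x"
  shows "\<exists>m. is_max_wrt le A m"
  using finite_total_has_least[of W A "\<lambda>x y. le y x"] assms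
  unfolding is_min_wrt_def is_max_wrt_def by blast

lemma the_is_min_wrt:
  assumes "\<And>x y. x \<in> A \<Longrightarrow> y \<in> A \<Longrightarrow> le x y \<Longrightarrow> le y x \<Longrightarrow> x = y"
    and "is_min_wrt le A m"
  shows "(THE q. is_min_wrt le A q) = m"
proof (rule the_equality)
  show "is_min_wrt le A m" by fact
  show "q = m" if "is_min_wrt le A q" for q
    using assms that unfolding is_min_wrt_def by blast
qed

lemma max_lower_quantile_eq_quantile_of_min_cdf:
  fixes F :: "'p \<Rightarrow> 'w \<Rightarrow> real"
  assumes "finite W"
    and antisym: "\<And>x y. x \<in> W \<Longrightarrow> y \<in> W \<Longrightarrow> le x y \<Longrightarrow> le y x \<Longrightarrow> x = y"
    and trans: "\<And>x y z. x \<in> W \<Longrightarrow> y \<in> W \<Longrightarrow> z \<in> W \<Longrightarrow> le x y \<Longrightarrow> le y z \<Longrightarrow> le x z"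
    and total: "\<And>x y. x \<in> W \<Longrightarrow> y \<in> W \<Longrightarrow> le x y \<or> le y x"
    and mono: "\<And>p x y. x \<in> W \<Longrightarrow> y \<in> W \<Longrightarrow> le x y \<Longrightarrow> F p x \<le> F p y"
    and attained: "\<And>w. \<exists>p. \<forall>p'. F p w \<le> F p' w"
    and q: "\<And>p. is_min_wrt le {w \<in> W. tau \<le> F p w} (q p)"
    and qs: "is_min_wrt le {w \<in> W. tau \<le> (INF p. F p w)} qs"
  shows "is_max_wrt le (range q) qs"
proof -
  have INF_le: "(INF p'. F p' w) \<le> F p w" for p w
  proof -
    obtain p0 where "\<forall>p'. F p0 w \<le> F p' w"
      using attained by blast
    then show ?thesis
      using INF_eq_attained_minimum[of "\<lambda>p. F p w" p0] by simp
  qed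
  have below_qs: "le (q p) qs" for p
  proof -
    have "qs \<in> W" "tau \<le> (INF p. F p qs)"
      using qs unfolding is_min_wrt_def by auto
    then have "qs \<in> {w \<in> W. tau \<le> F p w}"
      using INF_le[of qs p] by auto
    then show ?thesis
      using q[of p] unfolding is_min_wrt_def by blast
  qed
  have "\<exists>p. \<forall>w\<in>W. \<not> le qs w \<longrightarrow> F p w < tau"
  proof (cases "{w \<in> W. \<not> le qs w} = {}")
    case True
    then show ?thesis by simp
  next
    case False
    have "\<exists>l. is_max_wrt le {w \<in> W. \<not> le qs w} l"
      by (rule finite_total_has_greatest[OF \<open>finite W\<close> _ False]) (fact Collect_restrict trans total)+
    then obtain l where l: "l \<in> W" "\<not> le qs l" "\<And>w. w \<in> W \<Longrightarrow> \<not> le qs w \<Longrightarrow> le w l"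
      unfolding is_max_wrt_def by blast
    obtain p where p: "\<forall>p'. F p l \<le> F p' l"
      using attained by blast
    have "\<not> tau \<le> (INF p. F p l)"
      using qs l(1,2) unfolding is_min_wrt_def by blast
    then have "F p l < tau"
      using INF_eq_attained_minimum[of "\<lambda>p. F p l" p] p by simp
    moreover have "F p w \<le> F p l" if "w \<in> W" "\<not> le qs w" for w
      using mono[OF that(1) l(1) l(3)[OF that]] .
    ultimately show ?thesis
      by (meson le_less_trans)
  qed
  then obtain p where p: "\<And>w. w \<in> W \<Longrightarrow> \<not> le qs w \<Longrightarrow> F p w < tau"
    by blast
  have "q p \<in> W" "tau \<le> F p (q p)"
    using q[of p] unfolding is_min_wrt_def by auto
  then have "le qs (q p)"
    using p[of "q p"] by fastforce
  moreover have "qs \<in> W"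
    using qs unfolding is_min_wrt_def by auto
  ultimately have "q p = qs"
    using antisym below_qs \<open>q p \<in> W\<close> by blast
  then show ?thesis
    using below_qs unfolding is_max_wrt_def by auto
qed

lemma last_state_Cons: "last_state s0 ((a, s) # h) = last_state s h"
  by (auto simp: last_state_def)

lemma hist_prob_Cons:
  "hist_prob P s0 pol ((a, s) # h)
     = pmf (pol []) a * pmf (P s0 a) s * hist_prob P s (\<lambda>h'. pol ((a, s) # h')) h"
proof -
  have "(\<Prod>i<length h. pmf (pol (take (Suc i) ((a, s) # h))) (fst (((a, s) # h) ! Suc i))
          * pmf (P (last_state s0 (take (Suc i) ((a, s) # h))) (fst (((a, s) # h) ! Suc i)))
              (snd (((a, s) # h) ! Suc i)))
      = (\<Prod>i<length h. pmf (pol ((a, s) # take i h)) (fst (h ! i))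
          * pmf (P (last_state s (take i h)) (fst (h ! i))) (snd (h ! i)))"
    by (rule prod.cong) (simp_all add: last_state_Cons)
  then show ?thesis
    unfolding hist_prob_def
    by (simp only: length_Cons prod.lessThan_Suc_shift) (simp add: last_state_def mult.assoc)
qed

lemma hist_prob_nonneg: "0 \<le> hist_prob P s pol h"
  unfolding hist_prob_def by (auto intro!: prod_nonneg)

definition event_prob ::
  "('s \<Rightarrow> 'a \<Rightarrow> 's pmf) \<Rightarrow> 's \<Rightarrow> ('s,'a) policy \<Rightarrow> nat \<Rightarrow> (('s,'a) hist \<Rightarrow> bool) \<Rightarrow> real" where
  "event_prob P s pol n Q = (\<Sum>h\<in>{h. length h = n \<and> Q h}. hist_prob P s pol h)"

lemma event_prob_Suc:
  fixes P :: "'s::finite \<Rightarrow> 'a::finite \<Rightarrow> 's pmf"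
  shows "event_prob P s pol (Suc n) Q
    = (\<Sum>a\<in>UNIV. pmf (pol []) a * (\<Sum>s'\<in>UNIV. pmf (P s a) s'
         * event_prob P s' (\<lambda>h. pol ((a, s') # h)) n (\<lambda>h. Q ((a, s') # h))))"
proof -
  have "event_prob P s pol (Suc n) Q
      = (\<Sum>x\<in>UNIV. \<Sum>h\<in>{h. length h = n \<and> Q (x # h)}. hist_prob P s pol (x # h))"
    unfolding event_prob_def by (rule sum_lists_length_Suc)
  also have "\<dots> = (\<Sum>(a, s')\<in>UNIV. pmf (pol []) a * (pmf (P s a) s'
      * event_prob P s' (\<lambda>h. pol ((a, s') # h)) n (\<lambda>h. Q ((a, s') # h))))"
    by (rule sum.cong) (auto simp: hist_prob_Cons event_prob_def sum_distrib_left mult.assoc)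
  also have "\<dots> = (\<Sum>a\<in>UNIV. \<Sum>s'\<in>UNIV. pmf (pol []) a * (pmf (P s a) s'
      * event_prob P s' (\<lambda>h. pol ((a, s') # h)) n (\<lambda>h. Q ((a, s') # h))))"
    by (subst UNIV_Times_UNIV[symmetric], subst sum.cartesian_product) simp
  finally show ?thesis
    by (simp add: sum_distrib_left)
qed

lemma event_prob_True:
  fixes P :: "'s::finite \<Rightarrow> 'a::finite \<Rightarrow> 's pmf"
  shows "event_prob P s pol n (\<lambda>_. True) = 1"
proof (induction n arbitrary: s pol)
  case 0
  then show ?case by (simp add: event_prob_def hist_prob_def)
next
  case (Suc n)
  then show ?case by (simp add: event_prob_Suc sum_pmf_eq_1)
qed

lemma event_prob_minimizer_exists:
  fixes P :: "'s::finite \<Rightarrow> 'a::finite \<Rightarrow> 's pmf"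
  shows "\<exists>pol. \<forall>pol'. event_prob P s pol n Q \<le> event_prob P s pol' n Q"
proof (induction n arbitrary: s Q)
  case 0
  show ?case
    by (rule exI[of _ undefined]) (simp add: event_prob_def hist_prob_def)
next
  case (Suc n)
  have "\<forall>x. \<exists>c. \<forall>pol'. event_prob P (snd x) c n (\<lambda>h. Q (x # h))
                        \<le> event_prob P (snd x) pol' n (\<lambda>h. Q (x # h))"
    using Suc.IH by blast
  then obtain cont where cont: "\<And>a s' pol'. event_prob P s' (cont (a, s')) n (\<lambda>h. Q ((a, s') # h))
                                              \<le> event_prob P s' pol' n (\<lambda>h. Q ((a, s') # h))"
    by (metis snd_conv)
  define g where
    "g a = (\<Sum>s'\<in>UNIV. pmf (P s a) s' * event_prob P s' (cont (a, s')) n (\<lambda>h. Q ((a, s') # h)))"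
    for a
  have "Min (range g) \<in> range g"
    by (rule Min_in) auto
  then obtain a0 where "g a0 = Min (range g)"
    by (metis imageE)
  then have a0: "g a0 \<le> g a" for a
    by simp
  define pol :: "('s,'a) policy" where
    "pol h = (case h of [] \<Rightarrow> return_pmf a0 | x # h' \<Rightarrow> cont x h')" for h
  have "event_prob P s pol (Suc n) Q = g a0"
    by (simp add: event_prob_Suc pol_def g_def)
  moreover have "g a0 \<le> event_prob P s pol' (Suc n) Q" for pol'
  proof -
    have "g a0 \<le> (\<Sum>a\<in>UNIV. pmf (pol' []) a * g a)"
      by (rule sum_pmf_mult_ge) (rule a0)
    also have "\<dots> \<le> event_prob P s pol' (Suc n) Q"
      unfolding event_prob_Suc g_def by (intro sum_mono mult_left_mono cont) auto
    finally show ?thesis .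
  qed
  ultimately show ?case by metis
qed

lemma event_prob_mono:
  fixes P :: "'s::finite \<Rightarrow> 'a::finite \<Rightarrow> 's pmf"
  assumes "\<And>h. length h = n \<Longrightarrow> Q h \<Longrightarrow> Q' h"
  shows "event_prob P s pol n Q \<le> event_prob P s pol n Q'"
  unfolding event_prob_def
  by (rule sum_mono2[OF finite_lists_length_eq_Collect]) (use assms hist_prob_nonneg in auto)

lemma event_prob_eq_1:
  fixes P :: "'s::finite \<Rightarrow> 'a::finite \<Rightarrow> 's pmf"
  assumes "\<And>h. length h = n \<Longrightarrow> Q h"
  shows "event_prob P s pol n Q = 1"
proof -
  have "event_prob P s pol n Q = event_prob P s pol n (\<lambda>_. True)"
    unfolding event_prob_def by (rule sum.cong) (use assms in auto)
  then show ?thesis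
    by (simp add: event_prob_True)
qed

lemma finite_wealth_levels:
  fixes r :: "'s::finite \<Rightarrow> 'a::finite \<Rightarrow> 'r"
  shows "finite (wealth_levels op w0 r s0 T)"
  unfolding wealth_levels_def
  by (rule finite_imageI) (use finite_lists_length_eq_Collect[of T "\<lambda>_. True"] in simp)

lemma wealth_levels_nonempty: "wealth_levels op w0 r s0 T \<noteq> {}"
  unfolding wealth_levels_def by (auto intro: exI[of _ "replicate T undefined"])

lemma wealth_levels_has_greatest:
  fixes r :: "'s::finite \<Rightarrow> 'a::finite \<Rightarrow> 'r"
  assumes "\<And>x y z. x \<in> wealth_levels op w0 r s0 T \<Longrightarrow> y \<in> wealth_levels op w0 r s0 T
                    \<Longrightarrow> z \<in> wealth_levels op w0 r s0 T \<Longrightarrow> le x y \<Longrightarrow> le y z \<Longrightarrow> le x z"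
    and "\<And>x y. x \<in> wealth_levels op w0 r s0 T \<Longrightarrow> y \<in> wealth_levels op w0 r s0 T
                    \<Longrightarrow> le x y \<or> le y x"
  shows "\<exists>top. is_max_wrt le (wealth_levels op w0 r s0 T) top"
  by (rule finite_total_has_greatest) (fact finite_wealth_levels wealth_levels_nonempty order.refl assms)+

lemma wealth_cdf_eq_event_prob:
  fixes P :: "'s::finite \<Rightarrow> 'a::finite \<Rightarrow> 's pmf"
  shows "wealth_cdf le P op w0 r s0 T pol w
    = event_prob P s0 pol T (\<lambda>h. le (wealth op w0 r s0 h) w)"
proof -
  let ?W = "wealth_levels op w0 r s0 T"
  let ?wl = "wealth op w0 r s0"
  have "wealth_cdf le P op w0 r s0 T pol w = (\<Sum>w'\<in>{w'\<in>?W. le w' w}.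
      \<Sum>h\<in>{h\<in>{h. length h = T \<and> le (?wl h) w}. ?wl h = w'}. hist_prob P s0 pol h)"
    unfolding wealth_cdf_def wealth_pmf_def by (intro sum.cong refl) auto
  also have "\<dots> = event_prob P s0 pol T (\<lambda>h. le (?wl h) w)"
    unfolding event_prob_def
  proof (rule sum.group)
    show "finite {w' \<in> ?W. le w' w}"
      by (rule finite_subset[OF _ finite_wealth_levels]) auto
    show "?wl ` {h. length h = T \<and> le (?wl h) w} \<subseteq> {w' \<in> ?W. le w' w}"
      unfolding wealth_levels_def by auto
  qed (rule finite_lists_length_eq_Collect)
  finally show ?thesis .
qed

lemma wealth_cdf_mono:
  fixes P :: "'s::finite \<Rightarrow> 'a::finite \<Rightarrow> 's pmf"
  assumes trans: "\<And>x y z. x \<in> wealth_levels op w0 r s0 T \<Longrightarrow> y \<in> wealth_levels op w0 r s0 T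
                    \<Longrightarrow> z \<in> wealth_levels op w0 r s0 T \<Longrightarrow> le x y \<Longrightarrow> le y z \<Longrightarrow> le x z"
    and "x \<in> wealth_levels op w0 r s0 T" "y \<in> wealth_levels op w0 r s0 T" "le x y"
  shows "wealth_cdf le P op w0 r s0 T pol x \<le> wealth_cdf le P op w0 r s0 T pol y"
  unfolding wealth_cdf_eq_event_prob
proof (rule event_prob_mono)
  fix h :: "('s,'a) hist"
  assume "length h = T" "le (wealth op w0 r s0 h) x"
  moreover have "wealth op w0 r s0 h \<in> wealth_levels op w0 r s0 T"
    using \<open>length h = T\<close> unfolding wealth_levels_def by simp
  ultimately show "le (wealth op w0 r s0 h) y"
    using trans assms(2-4) by blast
qed

lemma wealth_cdf_eq_1:
  fixes P :: "'s::finite \<Rightarrow> 'a::finite \<Rightarrow> 's pmf"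
  assumes "is_max_wrt le (wealth_levels op w0 r s0 T) w"
  shows "wealth_cdf le P op w0 r s0 T pol w = 1"
  unfolding wealth_cdf_eq_event_prob
  by (rule event_prob_eq_1) (use assms in \<open>auto simp: is_max_wrt_def wealth_levels_def\<close>)

lemma lower_quantile_is_min:
  fixes P :: "'s::finite \<Rightarrow> 'a::finite \<Rightarrow> 's pmf"
  assumes antisym: "\<And>x y. x \<in> wealth_levels op w0 r s0 T \<Longrightarrow> y \<in> wealth_levels op w0 r s0 T
                    \<Longrightarrow> le x y \<Longrightarrow> le y x \<Longrightarrow> x = y"
    and trans: "\<And>x y z. x \<in> wealth_levels op w0 r s0 T \<Longrightarrow> y \<in> wealth_levels op w0 r s0 T
                    \<Longrightarrow> z \<in> wealth_levels op w0 r s0 T \<Longrightarrow> le x y \<Longrightarrow> le y z \<Longrightarrow> le x z"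
    and total: "\<And>x y. x \<in> wealth_levels op w0 r s0 T \<Longrightarrow> y \<in> wealth_levels op w0 r s0 T
                    \<Longrightarrow> le x y \<or> le y x"
    and "tau \<le> 1"
  shows "is_min_wrt le {w \<in> wealth_levels op w0 r s0 T. tau \<le> wealth_cdf le P op w0 r s0 T pol w}
           (lower_quantile le P op w0 r s0 T tau pol)"
proof -
  let ?A = "{w \<in> wealth_levels op w0 r s0 T. tau \<le> wealth_cdf le P op w0 r s0 T pol w}"
  have "\<exists>top. is_max_wrt le (wealth_levels op w0 r s0 T) top"
    by (rule wealth_levels_has_greatest) (fact trans total)+
  then obtain top where top: "is_max_wrt le (wealth_levels op w0 r s0 T) top"
    by blast
  then have "top \<in> ?A"
    using wealth_cdf_eq_1[OF top] \<open>tau \<le> 1\<close> by (simp add: is_max_wrt_def)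
  then have "\<exists>m. is_min_wrt le ?A m"
    by (intro finite_total_has_least[OF finite_wealth_levels]) (auto intro: trans dest: total)
  then obtain m where m: "is_min_wrt le ?A m"
    by blast
  have "(THE q. is_min_wrt le ?A q) = m"
    by (rule the_is_min_wrt[OF _ m]) (use antisym in auto)
  with m show ?thesis
    unfolding lower_quantile_def by simp
qed

theorem lemma1:
  fixes P :: "'s::finite \<Rightarrow> 'a::finite \<Rightarrow> 's pmf"
    and r :: "'s \<Rightarrow> 'a \<Rightarrow> 'r"
    and op :: "'w \<Rightarrow> 'r \<Rightarrow> 'w"
    and w0 :: 'w and s0 :: 's and T :: nat
    and le :: "'w \<Rightarrow> 'w \<Rightarrow> bool"
    and tau :: real
  assumes refl: "\<And>x. x \<in> wealth_levels op w0 r s0 T \<Longrightarrow> le x x"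
    and antisym: "\<And>x y. x \<in> wealth_levels op w0 r s0 T \<Longrightarrow> y \<in> wealth_levels op w0 r s0 T
                    \<Longrightarrow> le x y \<Longrightarrow> le y x \<Longrightarrow> x = y"
    and trans: "\<And>x y z. x \<in> wealth_levels op w0 r s0 T \<Longrightarrow> y \<in> wealth_levels op w0 r s0 T
                    \<Longrightarrow> z \<in> wealth_levels op w0 r s0 T \<Longrightarrow> le x y \<Longrightarrow> le y z \<Longrightarrow> le x z"
    and total: "\<And>x y. x \<in> wealth_levels op w0 r s0 T \<Longrightarrow> y \<in> wealth_levels op w0 r s0 T
                    \<Longrightarrow> le x y \<or> le y x"
    and tau: "0 < tau" "tau \<le> 1"
  shows "(\<forall>w. \<exists>pol. wealth_cdf le P op w0 r s0 T pol w
                    = (INF pol'. wealth_cdf le P op w0 r s0 T pol' w))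
       \<and> (\<exists>qstar.
            is_min_wrt le {w \<in> wealth_levels op w0 r s0 T.
                tau \<le> (INF pol. wealth_cdf le P op w0 r s0 T pol w)} qstar
          \<and> is_max_wrt le (range (lower_quantile le P op w0 r s0 T tau)) qstar)"
proof -
  let ?W = "wealth_levels op w0 r s0 T"
  let ?F = "wealth_cdf le P op w0 r s0 T"
  have attained: "\<exists>pol. \<forall>pol'. ?F pol w \<le> ?F pol' w" for w
    unfolding wealth_cdf_eq_event_prob by (rule event_prob_minimizer_exists)
  have "\<exists>top. is_max_wrt le ?W top"
    by (rule wealth_levels_has_greatest) (fact trans total)+
  then obtain top where top: "is_max_wrt le ?W top"
    by blast
  then have "top \<in> {w \<in> ?W. tau \<le> (INF pol. ?F pol w)}"
    using wealth_cdf_eq_1[OF top] tau by (simp add: is_max_wrt_def)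
  then have "\<exists>q. is_min_wrt le {w \<in> ?W. tau \<le> (INF pol. ?F pol w)} q"
    by (intro finite_total_has_least[OF finite_wealth_levels]) (auto intro: trans dest: total)
  then obtain qstar where qstar: "is_min_wrt le {w \<in> ?W. tau \<le> (INF pol. ?F pol w)} qstar"
    by blast
  have "is_max_wrt le (range (lower_quantile le P op w0 r s0 T tau)) qstar"
  proof (rule max_lower_quantile_eq_quantile_of_min_cdf[where le = le, OF finite_wealth_levels])
    show "?F pol x \<le> ?F pol y" if "x \<in> ?W" "y \<in> ?W" "le x y" for pol x y
      using wealth_cdf_mono[where le = le, OF trans that] .
    show "is_min_wrt le {w \<in> ?W. tau \<le> ?F pol w} (lower_quantile le P op w0 r s0 T tau pol)" for pol
      using lower_quantile_is_min[where le = le, OF antisym trans total tau(2)] .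
  qed (fact antisym trans total attained qstar)+
  moreover have "\<exists>pol. ?F pol w = (INF pol'. ?F pol' w)" for w
  proof -
    obtain pol where "\<forall>pol'. ?F pol w \<le> ?F pol' w"
      using attained by blast
    then show ?thesis
      using INF_eq_attained_minimum[of "\<lambda>pol. ?F pol w" pol] by auto
  qed
  ultimately show ?thesis
    using qstar by auto
qed

end
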